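(* Let $F\subseteq E(H)$ with $|F|=\ell$. If there exist a tree embedding $(\mathcal T,\mathcal M,y)$ and a set of edges $E_b\subseteq E(\mathcal T)\setminus\mathcal M^{-1}(F)$ such that for every pair $(A,B)\in Z_F$ there is a path in $\mathcal T$ using only edges of $E_b$ connecting a leaf of $A$ to a leaf of $B$, then for every $i\in[q]$ the graph $(V,(E(H)\cup\mathcal M(E_b))\setminus F)$ contains a path from a vertex of $S_i$ to a vertex of $T_i$.
   Context: Standing setup. $G=(V,E)$ is an undirected graph with $n=|V|$, demand-pairs $(S_i,T_i)$, $i\in[q]$, of subsets of $V$. $\ell\ge1$ is an integer and $E_\ell\subseteq E$ an edge set such that in $(V,E_\ell)$ every $(S_i,T_i)$ is $\ell$-edge-connected. $x:E\to[0,1]$ satisfies $x_e=1$ for $e\in E_\ell$ and $\sum_{e\in\delta_G(X)}x_e\ge \ell+1$ for every $i\in[q]$ and every $X$ with $T_i\subseteq X\subseteq V\setminus S_i$. $\beta\ge1$ is a real. $\mathsf{LARGE}=\{e: x_e\ge 1/(4\ell\beta)\}$ and $H=(V,\mathsf{LARGE})$. Capacities: $\tilde x_e=1/(4\ell\beta)$ if $e\in\mathsf{LARGE}$; $\tilde x_e=0$ if $x_e<\frac{1}{2n^2}\cdot\frac1{4\ell\beta}$; $\tilde x_e=x_e$ otherwise. A tree embedding $(\mathcal T,\mathcal M,y)$ of $(G,\tilde x)$: $\mathcal T$ is a tree; $\mathcal M$ maps nodes of $\mathcal T$ to vertices of $G$ and is a bijection between leaves of $\mathcal T$ and $V$ (a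 vertex set of $G$ is identified with the corresponding leaf set); each tree edge $f=(u,v)$ is mapped to a path $\mathcal M(f)$ in $G$ between $\mathcal M(u)$ and $\mathcal M(v)$; $y(f)=\tilde x(\delta_G(X))$ where $(X,V\setminus X)$ is the leaf partition induced by $\mathcal T-f$. $\mathcal M^{-1}(e)=\{f: e\in\mathcal M(f)\}$, $\mathcal M^{-1}(F)=\bigcup_{e\in F}\mathcal M^{-1}(e)$, $\mathcal M(E')=\bigcup_{f\in E'}\mathcal M(f)$. Components: $\mathbb Q^F$ is the set of vertex sets of connected components of $(V,E(H)\setminus F)$; for nonempty $S\subseteq V$, $Q_S$ is the union of those components meeting $S$. A component $Q\in\mathbb Q^F$ is shattered (w.r.t. $\mathcal T$) if its leaves are not all in one connected component of $\mathcal T$ with the edges $\mathcal M^{-1}(F)$ removed, and intact otherwise. $\mathbb U^F_{\mathcal T}$ is the set of all partitions $(A',B')$ (parts may be empty) of the set of shattered components, and $Z_F=\{(A'\cup Q_{S_i},\,B'\cup Q_{T_i}) : (A',B')\in\mathbb U^F_{\mathcal T},\ i\in[q],\ Q_{S_i}\cap Q_{T_i}=\emptyset\}$, where $A'$, $B'$ are identified with the union of their components. *)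

theory Defs
  imports Complex_Main "HOL-Library.FuncSet"
begin

definition graph :: "'a set \<Rightarrow> 'a set set \<Rightarrow> bool" where
  "graph V E \<longleftrightarrow> finite V \<and> (\<forall>e\<in>E. e \<subseteq> V \<and> card e = 2)"

definition is_path :: "'a set \<Rightarrow> 'a set set \<Rightarrow> 'a list \<Rightarrow> bool" where
  "is_path V Es p \<longleftrightarrow> p \<noteq> [] \<and> set p \<subseteq> V \<and> distinct p \<and>
     (\<forall>i. Suc i < length p \<longrightarrow> {p ! i, p ! Suc i} \<in> Es)"

definition path_edges :: "'a list \<Rightarrow> 'a set set" where
  "path_edges p = {{p ! i, p ! Suc i} | i. Suc i < length p}"

definition has_path :: "'a set \<Rightarrow> 'a set set \<Rightarrow> 'a \<Rightarrow> 'a \<Rightarrow> bool" where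
  "has_path V Es u v \<longleftrightarrow> (\<exists>p. is_path V Es p \<and> hd p = u \<and> last p = v)"

definition cut :: "'a set \<Rightarrow> 'a set set \<Rightarrow> 'a set \<Rightarrow> 'a set set" where
  "cut V E X = {e \<in> E. e \<inter> X \<noteq> {} \<and> e \<inter> (V - X) \<noteq> {}}"

definition components :: "'a set \<Rightarrow> 'a set set \<Rightarrow> 'a set set" where
  "components V Es = {{w \<in> V. has_path V Es v w} | v. v \<in> V}"

definition compQ :: "'a set \<Rightarrow> 'a set set \<Rightarrow> 'a set \<Rightarrow> 'a set" where
  "compQ V Es S = \<Union>{Q \<in> components V Es. Q \<inter> S \<noteq> {}}"

definition is_tree :: "'n set \<Rightarrow> 'n set set \<Rightarrow> bool" where
  "is_tree N TE \<longleftrightarrow> graph N TE \<and> N \<noteq> {} \<and>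
     (\<forall>u\<in>N. \<forall>v\<in>N. has_path N TE u v) \<and>
     (\<forall>f\<in>TE. \<forall>u v. f = {u, v} \<longrightarrow> \<not> has_path N (TE - {f}) u v)"

text \<open>Leaves of a tree: nodes of degree at most one (degree one unless the tree is a single node).\<close>
definition leaves :: "'n set \<Rightarrow> 'n set set \<Rightarrow> 'n set" where
  "leaves N TE = {u \<in> N. card {f \<in> TE. u \<in> f} \<le> 1}"

definition leaf_set :: "'n set \<Rightarrow> 'n set set \<Rightarrow> ('n \<Rightarrow> 'v) \<Rightarrow> 'v set \<Rightarrow> 'n set" where
  "leaf_set N TE M A = {u \<in> leaves N TE. M u \<in> A}"

definition xtilde :: "nat \<Rightarrow> real \<Rightarrow> nat \<Rightarrow> ('v set \<Rightarrow> real) \<Rightarrow> 'v set \<Rightarrow> real" where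
  "xtilde l \<beta> n x e =
     (if x e \<ge> 1 / (4 * real l * \<beta>) then 1 / (4 * real l * \<beta>)
      else if x e < 1 / (2 * (real n)\<^sup>2) * (1 / (4 * real l * \<beta>)) then 0
      else x e)"

definition LARGE :: "'v set set \<Rightarrow> nat \<Rightarrow> real \<Rightarrow> ('v set \<Rightarrow> real) \<Rightarrow> 'v set set" where
  "LARGE E l \<beta> x = {e \<in> E. x e \<ge> 1 / (4 * real l * \<beta>)}"

text \<open>Tree embedding (T,M,y) of (G,xt): tree nodes N, tree edges TE, node map M,
  edge-to-path map P (a path is a vertex list), and y.\<close>
definition tree_embedding ::
  "'v set \<Rightarrow> 'v set set \<Rightarrow> ('v set \<Rightarrow> real) \<Rightarrow> 'n set \<Rightarrow> 'n set set \<Rightarrow> ('n \<Rightarrow> 'v)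
    \<Rightarrow> ('n set \<Rightarrow> 'v list) \<Rightarrow> ('n set \<Rightarrow> real) \<Rightarrow> bool" where
  "tree_embedding V E xt N TE M P y \<longleftrightarrow>
     is_tree N TE \<and> M \<in> N \<rightarrow> V \<and> bij_betw M (leaves N TE) V \<and>
     (\<forall>f\<in>TE. \<forall>u v. f = {u, v} \<longrightarrow> is_path V E (P f) \<and>
         ((hd (P f) = M u \<and> last (P f) = M v) \<or> (hd (P f) = M v \<and> last (P f) = M u))) \<and>
     (\<forall>f\<in>TE. \<forall>u\<in>f. y f = sum xt (cut V E (M ` {w \<in> leaves N TE. has_path N (TE - {f}) u w})))"

definition Minv :: "'n set set \<Rightarrow> ('n set \<Rightarrow> 'v list) \<Rightarrow> 'v set set \<Rightarrow> 'n set set" where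
  "Minv TE P F = {f \<in> TE. \<exists>e\<in>F. e \<in> path_edges (P f)}"

definition Medges :: "('n set \<Rightarrow> 'v list) \<Rightarrow> 'n set set \<Rightarrow> 'v set set" where
  "Medges P E' = (\<Union>f\<in>E'. path_edges (P f))"

definition shattered ::
  "'n set \<Rightarrow> 'n set set \<Rightarrow> ('n \<Rightarrow> 'v) \<Rightarrow> ('n set \<Rightarrow> 'v list) \<Rightarrow> 'v set set \<Rightarrow> 'v set \<Rightarrow> bool" where
  "shattered N TE M P F Q \<longleftrightarrow>
     \<not> (\<exists>C \<in> components N (TE - Minv TE P F). leaf_set N TE M Q \<subseteq> C)"

text \<open>Z_F (with components taken in (V, E(H) - F), H = (V, LARGE)).\<close>
definition ZF ::
  "'v set \<Rightarrow> 'v set set \<Rightarrow> nat \<Rightarrow> (nat \<Rightarrow> 'v set) \<Rightarrow> (nat \<Rightarrow> 'v set) \<Rightarrow>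
   'n set \<Rightarrow> 'n set set \<Rightarrow> ('n \<Rightarrow> 'v) \<Rightarrow> ('n set \<Rightarrow> 'v list) \<Rightarrow> 'v set set \<Rightarrow> ('v set \<times> 'v set) set" where
  "ZF V EH q S T N TE M P F =
     (let Sh = {Q \<in> components V (EH - F). shattered N TE M P F Q} in
      {(\<Union>A' \<union> compQ V (EH - F) (S i), \<Union>B' \<union> compQ V (EH - F) (T i)) | A' B' i.
         A' \<union> B' = Sh \<and> A' \<inter> B' = {} \<and> i \<in> {1..q} \<and>
         compQ V (EH - F) (S i) \<inter> compQ V (EH - F) (T i) = {}})"

end

theory Submission
  imports Defs
begin

text \<open>Suppose no vertex of \<open>S\<^sub>i\<close> reaches \<open>T\<^sub>i\<close> in \<open>G' = (V, (E(H) \<union> \<M>(E\<^sub>b)) - F)\<close> and let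
  \<open>R\<close> be the set of vertices reachable from \<open>S\<^sub>i\<close> in \<open>G'\<close>. Every component of \<open>(V, E(H) - F)\<close>
  lies inside \<open>R\<close> or outside it, so putting the shattered components inside \<open>R\<close> into \<open>A'\<close> and
  the others into \<open>B'\<close> yields a pair \<open>(A, B) \<in> Z\<^sub>F\<close> with \<open>A \<subseteq> R\<close> and \<open>B \<inter> R = {}\<close>.
  A tree path in \<open>E\<^sub>b\<close> from a leaf of \<open>A\<close> to a leaf of \<open>B\<close> maps under \<open>\<M>\<close> to a walk in
  \<open>G'\<close>, because the image paths of edges of \<open>E\<^sub>b\<close> avoid \<open>F\<close>; hence \<open>B\<close> meets \<open>R\<close>.\<close>

definition is_walk :: "'a set \<Rightarrow> 'a set set \<Rightarrow> 'a list \<Rightarrow> bool" where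
  "is_walk V Es p \<longleftrightarrow> p \<noteq> [] \<and> set p \<subseteq> V \<and> (\<forall>i. Suc i < length p \<longrightarrow> {p ! i, p ! Suc i} \<in> Es)"

lemma is_path_iff_walk: "is_path V Es p \<longleftrightarrow> is_walk V Es p \<and> distinct p"
  unfolding is_path_def is_walk_def by auto

lemma is_walk_snocD:
  assumes "is_walk V Es (p @ [z])" "p \<noteq> []"
  shows "is_walk V Es p" "{last p, z} \<in> Es"
proof -
  have step: "{(p @ [z]) ! i, (p @ [z]) ! Suc i} \<in> Es" if "Suc i < Suc (length p)" for i
    using assms(1) that unfolding is_walk_def by simp
  have "{p ! i, p ! Suc i} \<in> Es" if "Suc i < length p" for i
    using step[of i] that by (simp add: nth_append)
  then show "is_walk V Es p"
    using assms(1,2) unfolding is_walk_def by auto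
  show "{last p, z} \<in> Es"
    using step[of "length p - 1"] assms(2) by (simp add: nth_append last_conv_nth)
qed

lemma has_path_snoc:
  assumes "has_path V Es u w" "{w, z} \<in> Es" "z \<in> V"
  shows "has_path V Es u z"
proof -
  obtain p where p: "is_path V Es p" "hd p = u" "last p = w"
    using assms(1) unfolding has_path_def by blast
  show ?thesis
  proof (cases "z \<in> set p")
    case True
    then obtain k where k: "k < length p" "p ! k = z" by (auto simp: in_set_conv_nth)
    have "is_path V Es (take (Suc k) p)"
      using p(1) unfolding is_path_def by (auto dest: in_set_takeD)
    moreover have "hd (take (Suc k) p) = u" "last (take (Suc k) p) = z"
      using p k by (auto simp: take_Suc_conv_app_nth is_path_def hd_append hd_conv_nth)
    ultimately show ?thesis unfolding has_path_def by blast
  next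
    case False
    have p_ne: "p \<noteq> []" using p(1) by (simp add: is_path_def)
    have "{(p @ [z]) ! i, (p @ [z]) ! Suc i} \<in> Es" if i: "Suc i < length (p @ [z])" for i
    proof (cases "Suc i < length p")
      case True
      then show ?thesis using p(1) by (simp add: is_path_def nth_append)
    next
      case False
      with i have "i = length p - 1" by simp
      with i p_ne p(3) have "(p @ [z]) ! i = w" "(p @ [z]) ! Suc i = z"
        by (auto simp: nth_append last_conv_nth)
      then show ?thesis using assms(2) by simp
    qed
    then have "is_path V Es (p @ [z])"
      using p(1) False assms(3) by (auto simp: is_path_def)
    then show ?thesis using p p_ne unfolding has_path_def by force
  qed
qed

lemma has_path_refl: "u \<in> V \<Longrightarrow> has_path V Es u u"
  unfolding has_path_def is_path_def by (rule exI[of _ "[u]"]) simp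

lemma has_path_mono: "has_path V Es u v \<Longrightarrow> Es \<subseteq> Es' \<Longrightarrow> has_path V Es' u v"
  unfolding has_path_def is_path_def by blast

lemma has_path_walk:
  "is_walk V Es p \<Longrightarrow> has_path V Es u (hd p) \<Longrightarrow> has_path V Es u (last p)"
proof (induction p rule: rev_induct)
  case Nil
  then show ?case by (simp add: is_walk_def)
next
  case (snoc z p)
  show ?case
  proof (cases "p = []")
    case True
    then show ?thesis using snoc.prems by simp
  next
    case False
    have "is_walk V Es p" "{last p, z} \<in> Es"
      using is_walk_snocD[OF snoc.prems(1) False] by auto
    moreover have "z \<in> V" using snoc.prems(1) by (simp add: is_walk_def)
    ultimately show ?thesis
      using snoc.IH snoc.prems(2) False by (simp add: has_path_snoc)
  qed
qed

lemma walk_has_path: "is_walk V Es p \<Longrightarrow> has_path V Es (hd p) (last p)"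
  by (rule has_path_walk) (auto simp: is_walk_def intro!: has_path_refl)

lemma has_path_trans: "has_path V Es u v \<Longrightarrow> has_path V Es v w \<Longrightarrow> has_path V Es u w"
proof -
  assume "has_path V Es u v" "has_path V Es v w"
  then show ?thesis
    using has_path_walk unfolding has_path_def[of V Es v w] is_path_iff_walk by metis
qed

lemma has_path_sym:
  assumes "has_path V Es u v"
  shows "has_path V Es v u"
proof -
  obtain p where p: "is_walk V Es p" "hd p = u" "last p = v"
    using assms unfolding has_path_def is_path_iff_walk by blast
  have "{rev p ! i, rev p ! Suc i} \<in> Es" if "Suc i < length p" for i
    using p(1) that unfolding is_walk_def
    by (auto simp: rev_nth insert_commute Suc_diff_Suc dest: spec[of _ "length p - Suc (Suc i)"])
  then have "is_walk V Es (rev p)" using p(1) by (simp add: is_walk_def)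
  from walk_has_path[OF this] show ?thesis using p by (simp add: hd_rev last_rev)
qed

lemma has_path_image:
  assumes "has_path N Es a b" "g \<in> N \<rightarrow> V"
    and edge: "\<And>u v. {u, v} \<in> Es \<Longrightarrow> has_path V Es' (g u) (g v)"
  shows "has_path V Es' (g a) (g b)"
proof -
  have "has_path V Es' (g (hd p)) (g (last p))" if "is_walk N Es p" for p
    using that
  proof (induction p rule: rev_induct)
    case Nil
    then show ?case by (simp add: is_walk_def)
  next
    case (snoc z p)
    show ?case
    proof (cases "p = []")
      case True
      then show ?thesis
        using snoc.prems assms(2) by (auto simp: is_walk_def intro: has_path_refl)
    next
      case False
      then show ?thesis
        using is_walk_snocD[OF snoc.prems False] snoc.IH edge by (auto intro: has_path_trans)
    qed
  qed
  then show ?thesis using assms(1) unfolding has_path_def is_path_iff_walk by blast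
qed

lemma component_subset_or_disjoint:
  assumes "Q \<in> components V H" "H \<subseteq> G"
    and closed: "\<And>a b. a \<in> R \<Longrightarrow> has_path V G a b \<Longrightarrow> b \<in> R"
  shows "Q \<subseteq> R \<or> Q \<inter> R = {}"
proof -
  obtain v where Q: "Q = {w \<in> V. has_path V H v w}"
    using assms(1) unfolding components_def by blast
  have "has_path V G w w'" if "w \<in> Q" "w' \<in> Q" for w w'
  proof -
    have "has_path V H w v" "has_path V H v w'" using that Q by (auto intro: has_path_sym)
    then show ?thesis using assms(2) by (meson has_path_trans has_path_mono)
  qed
  then show ?thesis using closed by blast
qed

lemma embedded_path_has_path:
  assumes emb: "tree_embedding V E xt N TE M P y"
    and Eb: "Eb \<subseteq> TE - Minv TE P F"
    and ab: "has_path N Eb a b"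
  shows "has_path V (Medges P Eb - F) (M a) (M b)"
  using ab
proof (rule has_path_image)
  show "M \<in> N \<rightarrow> V" using emb unfolding tree_embedding_def by blast
next
  fix u v assume f: "{u, v} \<in> Eb"
  then have f_TE: "{u, v} \<in> TE" and f_F: "{u, v} \<notin> Minv TE P F" using Eb by auto
  let ?p = "P {u, v}"
  have p: "is_path V E ?p"
    and ends: "(hd ?p = M u \<and> last ?p = M v) \<or> (hd ?p = M v \<and> last ?p = M u)"
    using emb f_TE unfolding tree_embedding_def by blast+
  have "path_edges ?p \<subseteq> Medges P Eb - F"
    using f f_TE f_F unfolding Medges_def Minv_def by blast
  then have "is_walk V (Medges P Eb - F) ?p"
    using p unfolding is_path_iff_walk is_walk_def path_edges_def by blast
  then show "has_path V (Medges P Eb - F) (M u) (M v)"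
    using ends walk_has_path has_path_sym by metis
qed

lemma has_path_if_partitions_linked:
  assumes HG: "H \<subseteq> G" and Sh: "Sh \<subseteq> components V H"
    and image: "\<And>a b. has_path N Eb a b \<Longrightarrow> has_path V G (M a) (M b)"
    and linked: "\<And>A' B'. A' \<union> B' = Sh \<Longrightarrow> A' \<inter> B' = {} \<Longrightarrow>
                   compQ V H S \<inter> compQ V H T = {} \<Longrightarrow>
                   \<exists>a\<in>leaf_set N TE M (\<Union>A' \<union> compQ V H S).
                   \<exists>b\<in>leaf_set N TE M (\<Union>B' \<union> compQ V H T). has_path N Eb a b"
  shows "\<exists>s\<in>S. \<exists>t\<in>T. has_path V G s t"
proof (rule ccontr)
  assume no_path: "\<not> ?thesis"
  define R where "R = {w. \<exists>s\<in>S. has_path V G s w}"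
  have closed: "b \<in> R" if "a \<in> R" "has_path V G a b" for a b
  proof -
    obtain s where "s \<in> S" "has_path V G s a" using \<open>a \<in> R\<close> unfolding R_def by blast
    with \<open>has_path V G a b\<close> show ?thesis unfolding R_def by (blast intro: has_path_trans)
  qed
  have split: "Q \<subseteq> R \<or> Q \<inter> R = {}" if "Q \<in> components V H" for Q
    using component_subset_or_disjoint[OF that HG closed] .
  have QS: "compQ V H S \<subseteq> R"
  proof
    fix w assume "w \<in> compQ V H S"
    then obtain Q s where Q: "Q \<in> components V H" "w \<in> Q" "s \<in> Q" "s \<in> S"
      unfolding compQ_def by blast
    then have "s \<in> V" unfolding components_def by blast
    then have "s \<in> R" using \<open>s \<in> S\<close> has_path_refl[of s V G] unfolding R_def by blast
    then show "w \<in> R" using split[OF Q(1)] Q(2,3) by blast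
  qed
  have T_out: "t \<notin> R" if "t \<in> T" for t
    using no_path that unfolding R_def by blast
  have "Q \<inter> R = {}" if "Q \<in> components V H" "Q \<inter> T \<noteq> {}" for Q
    using split[OF that(1)] that(2) T_out by blast
  then have QT: "compQ V H T \<inter> R = {}" unfolding compQ_def by blast
  define A' where "A' = {Q \<in> Sh. Q \<subseteq> R}"
  have "A' \<union> (Sh - A') = Sh" "A' \<inter> (Sh - A') = {}" by (auto simp: A'_def)
  moreover have "compQ V H S \<inter> compQ V H T = {}" using QS QT by blast
  ultimately obtain a b where a: "M a \<in> \<Union>A' \<union> compQ V H S"
    and b: "M b \<in> \<Union>(Sh - A') \<union> compQ V H T" and ab: "has_path N Eb a b"
    using linked unfolding leaf_set_def by blast
  have "M a \<in> R" using a QS unfolding A'_def by blast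
  then have "M b \<in> R" using closed image[OF ab] by blast
  moreover have "Q \<inter> R = {}" if "Q \<in> Sh - A'" for Q
    using split[of Q] that Sh unfolding A'_def by blast
  ultimately show False using b QT by blast
qed

theorem lemma5p5:
  fixes V :: "'v set" and E :: "'v set set" and q :: nat and S T :: "nat \<Rightarrow> 'v set"
    and l :: nat and El :: "'v set set" and x :: "'v set \<Rightarrow> real" and \<beta> :: real
    and F :: "'v set set"
    and N :: "'n set" and TE :: "'n set set" and M :: "'n \<Rightarrow> 'v"
    and P :: "'n set \<Rightarrow> 'v list" and y :: "'n set \<Rightarrow> real" and Eb :: "'n set set"
  assumes G: "graph V E"
    and ST: "\<forall>i\<in>{1..q}. S i \<noteq> {} \<and> T i \<noteq> {} \<and> S i \<subseteq> V \<and> T i \<subseteq> V"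
    and l: "l \<ge> 1"
    and El: "El \<subseteq> E"
    and El_conn: "\<forall>i\<in>{1..q}. \<forall>X. T i \<subseteq> X \<and> X \<subseteq> V - S i \<longrightarrow> card (cut V El X) \<ge> l"
    and x01: "\<forall>e\<in>E. 0 \<le> x e \<and> x e \<le> 1"
    and xEl: "\<forall>e\<in>El. x e = 1"
    and xcut: "\<forall>i\<in>{1..q}. \<forall>X. T i \<subseteq> X \<and> X \<subseteq> V - S i \<longrightarrow>
                 (\<Sum>e\<in>cut V E X. x e) \<ge> real l + 1"
    and \<beta>: "\<beta> \<ge> 1"
    and F: "F \<subseteq> LARGE E l \<beta> x" "card F = l"
    and emb: "tree_embedding V E (xtilde l \<beta> (card V) x) N TE M P y"
    and Eb: "Eb \<subseteq> TE - Minv TE P F"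
    and Z: "\<forall>(A, B) \<in> ZF V (LARGE E l \<beta> x) q S T N TE M P F.
              \<exists>a\<in>leaf_set N TE M A. \<exists>b\<in>leaf_set N TE M B. has_path N Eb a b"
  shows "\<forall>i\<in>{1..q}. \<exists>s\<in>S i. \<exists>t\<in>T i.
           has_path V ((LARGE E l \<beta> x \<union> Medges P Eb) - F) s t"
proof
  fix i assume i: "i \<in> {1..q}"
  let ?H = "LARGE E l \<beta> x - F"
  let ?G = "(LARGE E l \<beta> x \<union> Medges P Eb) - F"
  let ?Sh = "{Q \<in> components V ?H. shattered N TE M P F Q}"
  have image: "has_path V ?G (M a) (M b)" if "has_path N Eb a b" for a b
    using embedded_path_has_path[OF emb Eb that] has_path_mono[of V _ "M a" "M b" ?G] by blast
  have linked: "\<exists>a\<in>leaf_set N TE M (\<Union>A' \<union> compQ V ?H (S i)).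
                 \<exists>b\<in>leaf_set N TE M (\<Union>B' \<union> compQ V ?H (T i)). has_path N Eb a b"
    if "A' \<union> B' = ?Sh" "A' \<inter> B' = {}" "compQ V ?H (S i) \<inter> compQ V ?H (T i) = {}" for A' B'
  proof -
    have "(\<Union>A' \<union> compQ V ?H (S i), \<Union>B' \<union> compQ V ?H (T i))
            \<in> ZF V (LARGE E l \<beta> x) q S T N TE M P F"
      using that i unfolding ZF_def Let_def by blast
    then show ?thesis using Z by fast
  qed
  show "\<exists>s\<in>S i. \<exists>t\<in>T i. has_path V ?G s t"
    by (rule has_path_if_partitions_linked[where H = ?H and Sh = ?Sh, OF _ _ image linked]) auto
qed

end
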